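(* Let $V$ be a finite-dimensional vector space with a direct sum decomposition $V=V(1)\oplus\cdots\oplus V(l)$ and a flag of subspaces $V=\mathcal F^0V\supseteq\mathcal F^1V\supseteq\cdots\supseteq\mathcal F^mV=\{0\}$, $l,m\ge1$. Let $n=\dim V$ and for $1\le i\le n$ let $f(i)=\max\{k\ge0: i\le\dim\mathcal F^kV\}$. Then there exist bases $(x_i)_{1\le i\le n}$ and $(b_i)_{1\le i\le n}$ of $V$ and an upper triangular matrix $S=(s_{ij})\in k^{n\times n}$ with all diagonal entries $1$ such that: (1) for each $i$ there is $1\le g(i)\le l$ with $x_i\in V(g(i))$; (2) for each $0\le k\le m-1$, the vectors $b_i$ with $1\le i\le\dim\mathcal F^kV$ form a basis of $\mathcal F^kV$; (3) for all $1\le i\le n$, $b_i=x_i+\sum_{j>i}s_{ij}x_j=x_i+\sum_{j:\,f(j)<f(i),\,g(j)\ne g(i)}s_{ij}x_j$.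
   Context: $k$ denotes the ground field. *)

theory Defs
  imports Main "HOL.Vector_Spaces"
begin

definition indexed_basis ::
  "('k::field \<Rightarrow> 'v::ab_group_add \<Rightarrow> 'v) \<Rightarrow> (nat \<Rightarrow> 'v) \<Rightarrow> nat set \<Rightarrow> 'v set \<Rightarrow> bool" where
  "indexed_basis scale x I W \<longleftrightarrow>
     inj_on x I \<and> \<not> module.dependent scale (x ` I) \<and> module.span scale (x ` I) = W"

definition internal_direct_sum ::
  "('k::field \<Rightarrow> 'v::ab_group_add \<Rightarrow> 'v) \<Rightarrow> nat \<Rightarrow> (nat \<Rightarrow> 'v set) \<Rightarrow> bool" where
  "internal_direct_sum scale l Vs \<longleftrightarrow>
     (\<forall>i\<in>{1..l}. module.subspace scale (Vs i)) \<and>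
     (\<forall>v. \<exists>u. (\<forall>i\<in>{1..l}. u i \<in> Vs i) \<and> v = (\<Sum>i=1..l. u i)) \<and>
     (\<forall>u. (\<forall>i\<in>{1..l}. u i \<in> Vs i) \<and> (\<Sum>i=1..l. u i) = 0 \<longrightarrow> (\<forall>i\<in>{1..l}. u i = 0))"

definition is_flag ::
  "('k::field \<Rightarrow> 'v::ab_group_add \<Rightarrow> 'v) \<Rightarrow> nat \<Rightarrow> (nat \<Rightarrow> 'v set) \<Rightarrow> bool" where
  "is_flag scale m F \<longleftrightarrow>
     (\<forall>k\<le>m. module.subspace scale (F k)) \<and> F 0 = UNIV \<and> F m = {0} \<and>
     (\<forall>k<m. F (Suc k) \<subseteq> F k)"

definition flag_level ::
  "('k::field \<Rightarrow> 'v::ab_group_add \<Rightarrow> 'v) \<Rightarrow> nat \<Rightarrow> (nat \<Rightarrow> 'v set) \<Rightarrow> nat \<Rightarrow> nat" where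
  "flag_level scale m F i = Max {k. k \<le> m \<and> i \<le> vector_space.dim scale (F k)}"

end

theory Submission
  imports Defs
begin

text \<open>
  The bases are built by descending the flag. Suppose that for the indices \<open>j > dim F\<^sup>k V\<close>
  homogeneous vectors \<open>x\<^sub>j\<close> spanning a complement of \<open>F\<^sup>k V\<close> have been chosen. A basis of
  \<open>F\<^sup>k\<^sup>+\<^sup>1 V\<close> together with these \<open>x\<^sub>j\<close> extends to a basis of \<open>V\<close> by homogeneous vectors
  \<open>y \<in> V(c)\<close>. Write \<open>y = a + w\<close> with \<open>a \<in> F\<^sup>k V\<close> and \<open>w\<close> in the span of the \<open>x\<^sub>j\<close>, and remove
  from \<open>y\<close> the part of \<open>w\<close> spanned by those \<open>x\<^sub>j\<close> lying in \<open>V(c)\<close>. The corrected vector \<open>x\<close>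
  is still homogeneous and congruent to \<open>y\<close> modulo the earlier \<open>x\<^sub>j\<close>, so the enlarged family
  spans a complement of \<open>F\<^sup>k\<^sup>+\<^sup>1 V\<close>, while \<open>b := a\<close> differs from \<open>x\<close> only by earlier
  \<open>x\<^sub>j\<close> from other summands. At the bottom of the flag the \<open>x\<^sub>j\<close> form a homogeneous basis,
  and \<open>b\<close> is obtained from it by a unitriangular matrix.
\<close>

lemma le_Max_threshold_iff:
  fixes d :: "nat \<Rightarrow> nat"
  assumes antimono: "\<And>a c. a \<le> c \<Longrightarrow> c \<le> m \<Longrightarrow> d c \<le> d a" and "i \<le> d 0" "k \<le> m"
  shows "k \<le> Max {k. k \<le> m \<and> i \<le> d k} \<longleftrightarrow> i \<le> d k"
proof -
  let ?S = "{k. k \<le> m \<and> i \<le> d k}"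
  have fin: "finite ?S"
    by (rule finite_subset[of _ "{..m}"]) auto
  moreover have "0 \<in> ?S"
    using assms(2) by simp
  ultimately have max: "Max ?S \<in> ?S"
    using Max_in by blast
  show ?thesis
  proof
    assume "k \<le> Max ?S"
    then show "i \<le> d k"
      using antimono[of k "Max ?S"] max by auto
  qed (use fin assms(3) in auto)
qed

context module
begin

definition complement_basis :: "'b set \<Rightarrow> 'b set \<Rightarrow> bool" where
  "complement_basis U X \<longleftrightarrow>
     independent X \<and> U \<inter> span X \<subseteq> {0} \<and> (\<forall>v. \<exists>u\<in>U. \<exists>w\<in>span X. v = u + w)"

lemma complement_basis_lift:
  assumes "complement_basis U (x ` J)" "subspace W" "v \<in> W" "x ` {j\<in>J. g j = c} \<subseteq> W"
  obtains z a where "z \<in> W" "a \<in> U" "a - z \<in> span (x ` {j\<in>J. g j \<noteq> c})"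
    "v - z \<in> span (x ` J)"
proof -
  obtain a w where a: "a \<in> U" "w \<in> span (x ` J)" "v = a + w"
    using assms(1) unfolding complement_basis_def by metis
  have "x ` J = x ` {j\<in>J. g j = c} \<union> x ` {j\<in>J. g j \<noteq> c}"
    by auto
  then obtain s t where st: "w = s + t" "s \<in> span (x ` {j\<in>J. g j = c})"
      "t \<in> span (x ` {j\<in>J. g j \<noteq> c})"
    using a(2) span_Un by auto
  have "s \<in> W"
    using span_minimal[OF assms(4,2)] st(2) by auto
  moreover have "s \<in> span (x ` J)"
    using span_mono[of "x ` {j\<in>J. g j = c}" "x ` J"] st(2) by auto
  moreover have "a - (v - s) = - t"
    using a(3) st(1) by (simp add: algebra_simps)
  ultimately show thesis
    using that[of "v - s" a] subspace_diff[OF assms(2,3)] a(1) st(3) span_neg by auto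
qed

lemma unitriangular_coefficients:
  fixes x b :: "nat \<Rightarrow> 'b" and n :: nat
  assumes x: "inj_on x {1..n}"
    and b: "\<forall>i\<in>{1..n}. K i \<subseteq> {i<..n} \<and> b i - x i \<in> span (x ` K i)"
  obtains S where "\<forall>i\<in>{1..n}. \<forall>j\<in>{1..n}. j < i \<longrightarrow> S i j = 0" "\<forall>i\<in>{1..n}. S i i = 1"
    "\<forall>i\<in>{1..n}. b i = x i + (\<Sum>j\<in>{i<..n}. S i j *s x j) \<and> b i = x i + (\<Sum>j\<in>K i. S i j *s x j)"
proof -
  have "\<forall>i\<in>{1..n}. \<exists>c. b i - x i = (\<Sum>j\<in>K i. c j *s x j)"
  proof
    fix i assume i: "i \<in> {1..n}"
    have "K i \<subseteq> {i<..n}"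
      using b i by blast
    moreover have "{i<..n} \<subseteq> {1..n}"
      using i by auto
    ultimately have K: "finite (K i)" "inj_on x (K i)"
      using finite_subset inj_on_subset[OF x] by blast+
    have "b i - x i \<in> range (\<lambda>u. \<Sum>v\<in>x ` K i. u v *s v)"
      using b i span_finite[OF finite_imageI[OF K(1), of x]] by blast
    then obtain u where "b i - x i = (\<Sum>v\<in>x ` K i. u v *s v)"
      by blast
    then show "\<exists>c. b i - x i = (\<Sum>j\<in>K i. c j *s x j)"
      using sum.reindex[OF K(2), of "\<lambda>v. u v *s v"] by auto
  qed
  then obtain C where C: "\<forall>i\<in>{1..n}. b i - x i = (\<Sum>j\<in>K i. C i j *s x j)"
    by metis
  define S where "S i j = (if j = i then 1 else if j \<in> K i then C i j else 0)" for i j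
  have "(\<Sum>j\<in>{i<..n}. S i j *s x j) = (\<Sum>j\<in>K i. S i j *s x j)" if "i \<in> {1..n}" for i
    by (rule sum.mono_neutral_right) (use that b in \<open>auto simp: S_def\<close>)
  moreover have "(\<Sum>j\<in>K i. S i j *s x j) = (\<Sum>j\<in>K i. C i j *s x j)" if "i \<in> {1..n}" for i
  proof (rule sum.cong)
    show "S i j *s x j = C i j *s x j" if "j \<in> K i" for j
      using b \<open>i \<in> {1..n}\<close> that by (fastforce simp: S_def)
  qed simp
  ultimately have sums: "\<forall>i\<in>{1..n}. b i = x i + (\<Sum>j\<in>{i<..n}. S i j *s x j) \<and>
      b i = x i + (\<Sum>j\<in>K i. S i j *s x j)"
    using C by (simp add: algebra_simps)
  have lower: "\<forall>i\<in>{1..n}. \<forall>j\<in>{1..n}. j < i \<longrightarrow> S i j = 0"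
  proof (intro ballI impI)
    fix i j assume "i \<in> {1..n}" "j < i"
    then have "j \<notin> K i"
      using b by fastforce
    then show "S i j = 0"
      using \<open>j < i\<close> by (simp add: S_def)
  qed
  have "\<forall>i\<in>{1..n}. S i i = 1"
    by (simp add: S_def)
  then show thesis
    by (rule that[OF lower _ sums])
qed

end

context vector_space
begin

lemma finite_dimensional_vector_space_exists:
  assumes "finite B0" "span B0 = UNIV"
  obtains B where "finite_dimensional_vector_space scale B"
proof -
  obtain B where B: "B \<subseteq> B0" "independent B" "B0 \<subseteq> span B"
    by (rule maximal_independent_subset[of B0])
  have "span B = UNIV"
    using span_minimal[OF B(3)] assms(2) by auto
  then have "finite_dimensional_vector_space scale B"
    using B assms(1) finite_subset by unfold_locales auto
  then show thesis
    by (rule that)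
qed

lemma span_internal_direct_sum:
  assumes "internal_direct_sum scale l Vs"
  shows "span (\<Union>c\<in>{1..l}. Vs c) = UNIV"
proof -
  have "v \<in> span (\<Union>c\<in>{1..l}. Vs c)" for v
  proof -
    obtain u where u: "\<forall>c\<in>{1..l}. u c \<in> Vs c" "v = (\<Sum>c=1..l. u c)"
      using assms unfolding internal_direct_sum_def by metis
    show ?thesis
      unfolding u(2) using u(1) by (intro span_sum span_base) blast
  qed
  then show ?thesis
    by auto
qed

end

context finite_dimensional_vector_space
begin

lemma dim_Un_add_dim_span_Int: "dim (A \<union> B) + dim (span A \<inter> span B) = dim A + dim B"
  using dim_sums_Int[of "span A" "span B"] by (simp add: span_Un[symmetric])

lemma independent_Un:
  assumes "independent A" "independent B" "span A \<inter> span B \<subseteq> {0}"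
  shows "independent (A \<union> B)"
proof (rule card_le_dim_spanning[of "A \<union> B" "A \<union> B"])
  have "dim (span A \<inter> span B) = 0"
    using assms(3) by simp
  then have "dim (A \<union> B) = card A + card B"
    using dim_Un_add_dim_span_Int[of A B] assms by (simp add: dim_eq_card_independent del: dim_eq_0)
  then show "card (A \<union> B) \<le> dim (A \<union> B)"
    using card_Un_le[of A B] by simp
qed (use assms finiteI_independent in \<open>auto simp: span_superset\<close>)

lemma span_Int_subset_0_if_independent_Un:
  assumes "independent (A \<union> B)" "A \<inter> B = {}"
  shows "span A \<inter> span B \<subseteq> {0}"
proof -
  have A: "independent A" "finite A" and B: "independent B" "finite B"
    using assms(1) independent_mono finiteI_independent by blast+
  have "dim (A \<union> B) = dim A + dim B"
    using card_Un_disjoint[OF A(2) B(2) assms(2)] assms(1) A B by (simp add: dim_eq_card_independent)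
  then show ?thesis
    using dim_Un_add_dim_span_Int[of A B] by simp
qed

lemma dim_add_card_complement_basis:
  assumes "subspace U" "complement_basis U X"
  shows "dim U + card X = dim (UNIV :: 'b set)"
proof -
  have "{u + w |u w. u \<in> U \<and> w \<in> span X} = UNIV" "dim (U \<inter> span X) = 0"
    using assms(2) unfolding complement_basis_def by fastforce+
  then show ?thesis
    using dim_sums_Int[OF assms(1) subspace_span[of X]] assms(2)
    by (simp add: complement_basis_def dim_eq_card_independent del: dim_eq_0)
qed

lemma complement_basis_extend:
  assumes "subspace U" "U \<subseteq> U'" "complement_basis U' X" "span H = UNIV"
  obtains Y where "Y \<subseteq> H" "X \<inter> Y = {}" "complement_basis U (X \<union> Y)"
proof -
  obtain C where C: "C \<subseteq> U" "independent C" "U \<subseteq> span C"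
    by (meson basis_exists)
  have span_C: "span C = U"
    using span_subspace[OF C(1,3) assms(1)] .
  have X: "independent X" "U' \<inter> span X \<subseteq> {0}"
    using assms(3) by (simp_all add: complement_basis_def)
  have indep_CX: "independent (C \<union> X)"
    by (rule independent_Un[OF C(2) X(1)]) (use X(2) assms(2) span_C in auto)
  obtain B where B: "C \<union> X \<subseteq> B" "B \<subseteq> C \<union> X \<union> H" "independent B" "C \<union> X \<union> H \<subseteq> span B"
    by (rule maximal_independent_subset_extend[of "C \<union> X" "C \<union> X \<union> H"]) (simp_all add: indep_CX)
  define Y where "Y = B - (C \<union> X)"
  have "span H \<subseteq> span B"
    using B(4) by (intro span_minimal) auto
  then have span_B: "span B = UNIV"
    using assms(4) by auto
  have "C \<inter> X \<subseteq> {0}"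
    using X(2) assms(2) span_C span_superset[of C] span_superset[of X] by auto
  moreover have "0 \<notin> X"
    using X(1) dependent_zero by metis
  ultimately have CXY: "C \<inter> (X \<union> Y) = {}" "B = C \<union> (X \<union> Y)"
    using B(1) by (auto simp: Y_def)
  have "U \<inter> span (X \<union> Y) \<subseteq> {0}"
    using span_Int_subset_0_if_independent_Un[of C "X \<union> Y"] B(3) CXY span_C by argo
  moreover have "\<exists>u\<in>U. \<exists>w\<in>span (X \<union> Y). v = u + w" for v
  proof -
    have "v \<in> span (C \<union> (X \<union> Y))"
      using span_B CXY(2) by simp
    then show ?thesis
      unfolding span_Un span_C by auto
  qed
  moreover have "independent (X \<union> Y)"
    by (rule independent_mono[OF B(3)]) (use CXY(2) in auto)
  ultimately have "complement_basis U (X \<union> Y)"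
    by (simp add: complement_basis_def)
  then show thesis
    using that[of Y] B(2) by (auto simp: Y_def)
qed

lemma unitriangular_image:
  fixes y z :: "nat \<Rightarrow> 'b"
  assumes I: "finite I" "inj_on y I" "independent (y ` I)"
    and triangular: "\<forall>i\<in>I. z i - y i \<in> span (y ` {j\<in>I. i < j})"
  shows "inj_on z I" "independent (z ` I)" "span (z ` I) = span (y ` I)"
proof -
  have "z i \<in> span (y ` I)" if "i \<in> I" for i
  proof -
    have "z i - y i \<in> span (y ` I)"
      using triangular that span_mono[of "y ` {j\<in>I. i < j}" "y ` I"] by blast
    then show ?thesis
      using span_add[of "z i - y i" "y ` I" "y i"] span_base[of "y i"] that by simp
  qed
  moreover have "y i \<in> span (z ` I)" if "i \<in> I" for i
    using that
  proof (induction "Max I - i" arbitrary: i rule: less_induct)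
    case less
    have "y ` {j\<in>I. i < j} \<subseteq> span (z ` I)"
      using less.hyps Max_ge[OF I(1)] by (force intro: diff_less_mono2)
    then have "z i - y i \<in> span (z ` I)"
      using triangular less.prems span_minimal[of _ "span (z ` I)"] by blast
    then show ?case
      using span_diff[of "z i" "z ` I" "z i - y i"] span_base[of "z i"] less.prems by simp
  qed
  ultimately show span_eq: "span (z ` I) = span (y ` I)"
    by (auto simp: span_eq)
  have "dim (z ` I) = card I"
    using dim_span[of "z ` I"] dim_span[of "y ` I"] span_eq card_image[OF I(2)]
      dim_eq_card_independent[OF I(3)] by simp
  then show indep: "independent (z ` I)"
    by (intro card_le_dim_spanning[of "z ` I" "z ` I"]) (auto simp: I(1) card_image_le span_superset)
  show "inj_on z I"
    using eq_card_imp_inj_on[OF I(1), of z] dim_eq_card_independent[OF indep]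
      \<open>dim (z ` I) = card I\<close> by argo
qed

lemma indexed_basis_subset:
  assumes "inj_on b I" "independent (b ` I)" "K \<subseteq> I" "finite K"
    and "subspace W" "b ` K \<subseteq> W" "dim W \<le> card K"
  shows "indexed_basis scale b K W"
proof -
  have K: "inj_on b K" "independent (b ` K)"
    using inj_on_subset[OF assms(1,3)] independent_mono[OF assms(2) image_mono[OF assms(3)]] .
  then have "W \<subseteq> span (b ` K)"
    using card_ge_dim_independent[OF assms(6) K(2)] assms(7) card_image[OF K(1)] by simp
  then have "span (b ` K) = W"
    using span_minimal[OF assms(6,5)] by auto
  then show ?thesis
    using K unfolding indexed_basis_def by simp
qed

context
  fixes m :: nat and F :: "nat \<Rightarrow> 'b set"
  assumes flag: "is_flag scale m F"
begin

lemma flag_subspace: "k \<le> m \<Longrightarrow> subspace (F k)"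
  using flag by (simp add: is_flag_def)

lemma flag_antimono:
  assumes "a \<le> c" "c \<le> m"
  shows "F c \<subseteq> F a"
proof -
  have "F (min (Suc k) m) \<subseteq> F (min k m)" for k
    using flag by (cases "k < m") (auto simp: is_flag_def min_def)
  then show ?thesis
    using lift_Suc_antimono_le[of "\<lambda>k. F (min k m)", OF _ assms(1)] assms by simp
qed

lemma dim_flag_antimono: "a \<le> c \<Longrightarrow> c \<le> m \<Longrightarrow> dim (F c) \<le> dim (F a)"
  using flag_antimono dim_subset by blast

lemma le_flag_level_iff:
  assumes "i \<le> dim (UNIV :: 'b set)" "k \<le> m"
  shows "k \<le> flag_level scale m F i \<longleftrightarrow> i \<le> dim (F k)"
  unfolding flag_level_def
  using le_Max_threshold_iff[of m "\<lambda>k. dim (F k)"] dim_flag_antimono flag assms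
  by (simp add: is_flag_def)

lemma flag_level_le:
  assumes "i \<le> dim (UNIV :: 'b set)"
  shows "flag_level scale m F i \<le> m"
  unfolding flag_level_def
  using flag assms by (intro Max.boundedI) (auto simp: is_flag_def intro: exI[of _ 0])

lemma flag_level_less_iff:
  assumes "i \<le> dim (UNIV :: 'b set)" "k \<le> m"
  shows "flag_level scale m F i < k \<longleftrightarrow> dim (F k) < i"
  using le_flag_level_iff[OF assms] by linarith

lemma flag_level_antimono:
  assumes "i \<le> j" "j \<le> dim (UNIV :: 'b set)"
  shows "flag_level scale m F j \<le> flag_level scale m F i"
proof -
  have "j \<le> dim (F (flag_level scale m F j))"
    using le_flag_level_iff[OF assms(2) flag_level_le[OF assms(2)]] by simp
  then show ?thesis
    using le_flag_level_iff[of i "flag_level scale m F j"] flag_level_le[OF assms(2)] assms by simp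
qed

lemma flag_level_less_imp_less:
  assumes "i \<le> dim (UNIV :: 'b set)" "j \<le> dim (UNIV :: 'b set)"
    and "flag_level scale m F j < flag_level scale m F i"
  shows "i < j"
  using flag_level_antimono[of j i] assms by linarith

lemma flag_level_lower_subset:
  assumes "k \<le> m" "flag_level scale m F j \<le> k"
  shows "{i\<in>{1..dim UNIV}. flag_level scale m F i < flag_level scale m F j} \<subseteq> {dim (F k)<..dim UNIV}"
  using flag_level_less_iff[OF _ assms(1)] assms(2) by fastforce

lemma flag_indexed_basis:
  assumes "inj_on b {1..dim UNIV}" "independent (b ` {1..dim UNIV})"
    and "\<forall>i\<in>{1..dim UNIV}. b i \<in> F (flag_level scale m F i)" and k: "k \<le> m"
  shows "indexed_basis scale b {1..dim (F k)} (F k)"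
proof (rule indexed_basis_subset[OF assms(1,2)])
  show "{1..dim (F k)} \<subseteq> {1..dim UNIV}"
    using dim_subset[of "F k" UNIV] by auto
  show "b ` {1..dim (F k)} \<subseteq> F k"
  proof (rule image_subsetI)
    fix i assume "i \<in> {1..dim (F k)}"
    then have i: "i \<in> {1..dim UNIV}" "k \<le> flag_level scale m F i"
      using \<open>{1..dim (F k)} \<subseteq> {1..dim UNIV}\<close> le_flag_level_iff[OF _ k] by auto
    then have "F (flag_level scale m F i) \<subseteq> F k"
      using flag_antimono flag_level_le by simp
    then show "b i \<in> F k"
      using assms(3) i(1) by blast
  qed
qed (use flag_subspace k in auto)

context
  fixes l :: nat and Vs :: "nat \<Rightarrow> 'b set"
  assumes subspace_Vs: "\<And>c. c \<in> {1..l} \<Longrightarrow> subspace (Vs c)"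
    and span_Vs: "span (\<Union>c\<in>{1..l}. Vs c) = UNIV"
begin

text \<open>The state after the flag levels below \<open>k\<close> have been treated: \<open>x\<close>, \<open>b\<close>, \<open>g\<close> are fixed on
  the indices above \<open>dim F\<^sup>k V\<close> (exactly those of flag level \<open>< k\<close>), and these \<open>x\<^sub>j\<close> form
  a basis of a complement of \<open>F\<^sup>k V\<close>.\<close>

definition adapted_upto :: "nat \<Rightarrow> (nat \<Rightarrow> 'b) \<Rightarrow> (nat \<Rightarrow> 'b) \<Rightarrow> (nat \<Rightarrow> nat) \<Rightarrow> bool" where
  "adapted_upto k x b g \<longleftrightarrow>
     inj_on x {dim (F k)<..dim UNIV} \<and>
     complement_basis (F k) (x ` {dim (F k)<..dim UNIV}) \<and>
     (\<forall>j\<in>{dim (F k)<..dim UNIV}. g j \<in> {1..l} \<and> x j \<in> Vs (g j) \<and>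
        b j \<in> F (flag_level scale m F j) \<and>
        b j - x j \<in> span (x ` {i\<in>{1..dim UNIV}.
          flag_level scale m F i < flag_level scale m F j \<and> g i \<noteq> g j}))"

lemma adapted_upto_0: "adapted_upto 0 x b g"
  using flag by (simp add: adapted_upto_def is_flag_def complement_basis_def independent_empty)

lemma homogeneous_complement_extension:
  assumes k: "k < m"
    and x: "inj_on x {dim (F k)<..dim UNIV}" "complement_basis (F k) (x ` {dim (F k)<..dim UNIV})"
  obtains y where "\<forall>i\<in>{dim (F k)<..dim UNIV}. y i = x i"
    "inj_on y {dim (F (Suc k))<..dim UNIV}"
    "complement_basis (F (Suc k)) (y ` {dim (F (Suc k))<..dim UNIV})"
    "\<forall>i\<in>{dim (F (Suc k))<..dim (F k)}. \<exists>c. c \<in> {1..l} \<and> y i \<in> Vs c"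
proof -
  define J where "J = {dim (F k)<..dim (UNIV :: 'b set)}"
  define N where "N = {dim (F (Suc k))<..dim (F k)}"
  have "dim (F (Suc k)) \<le> dim (F k)" "dim (F k) \<le> dim (UNIV :: 'b set)"
    using dim_flag_antimono[of k "Suc k"] k dim_subset[OF subset_UNIV] by auto
  then have JN: "J \<union> N = {dim (F (Suc k))<..dim UNIV}" "J \<inter> N = {}"
    by (auto simp: J_def N_def)
  have "subspace (F (Suc k))" "F (Suc k) \<subseteq> F k"
    using flag_subspace flag_antimono k by simp_all
  then obtain Y where Y: "Y \<subseteq> (\<Union>c\<in>{1..l}. Vs c)" "x ` J \<inter> Y = {}"
      "complement_basis (F (Suc k)) (x ` J \<union> Y)"
    using complement_basis_extend[OF _ _ x(2)[folded J_def] span_Vs] by blast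
  have "independent (x ` J \<union> Y)"
    using Y(3) by (simp add: complement_basis_def)
  then have "finite Y" "finite (x ` J)"
    using finiteI_independent independent_mono by auto
  then have "card (x ` J \<union> Y) = card J + card Y"
    using card_Un_disjoint[OF _ _ Y(2)] card_image[OF x(1)[folded J_def]] by simp
  moreover have "dim (F (Suc k)) + card (x ` J \<union> Y) = dim (UNIV :: 'b set)"
    "dim (F k) + card (x ` J) = dim (UNIV :: 'b set)"
    using dim_add_card_complement_basis flag_subspace k Y(3) x(2)[folded J_def] by auto
  ultimately have "card N = card Y"
    using card_image[OF x(1)[folded J_def]] by (simp add: N_def)
  moreover have "finite N"
    by (simp add: N_def)
  ultimately obtain e where e: "bij_betw e N Y"
    using finite_same_card_bij[OF _ \<open>finite Y\<close>] by metis
  define y where "y i = (if i \<in> J then x i else e i)" for i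
  have y_J: "\<forall>i\<in>J. y i = x i" and y_N: "\<forall>i\<in>N. y i = e i"
    using JN(2) by (auto simp: y_def)
  have "y ` J = x ` J" "y ` N = Y"
    using y_J y_N bij_betw_imp_surj_on[OF e] by (simp_all cong: image_cong)
  then have image_y: "y ` (J \<union> N) = x ` J \<union> Y"
    by (simp add: image_Un)
  have "inj_on y J" "inj_on y N"
    using inj_on_cong[of J y x] y_J x(1) inj_on_cong[of N y e] y_N bij_betw_imp_inj_on[OF e]
    by (simp_all add: J_def)
  moreover have "J - N = J" "N - J = N"
    using JN(2) by auto
  ultimately have "inj_on y (J \<union> N)"
    using Y(2) \<open>y ` J = x ` J\<close> \<open>y ` N = Y\<close> by (simp add: inj_on_Un)
  moreover have "\<forall>i\<in>N. \<exists>c. c \<in> {1..l} \<and> y i \<in> Vs c"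
    using \<open>y ` N = Y\<close> Y(1) by blast
  ultimately show thesis
    using that[of y] y_J Y(3) image_y JN(1) by (simp add: J_def N_def)
qed

lemma homogeneous_lifts_exist:
  assumes x: "complement_basis U (x ` J)" "\<forall>j\<in>J. g j \<in> {1..l} \<and> x j \<in> Vs (g j)"
    and y: "\<forall>i\<in>N. \<exists>c. c \<in> {1..l} \<and> y i \<in> Vs c"
  obtains c z a where "\<forall>i\<in>N. c i \<in> {1..l} \<and> z i \<in> Vs (c i) \<and> a i \<in> U \<and>
    a i - z i \<in> span (x ` {j\<in>J. g j \<noteq> c i}) \<and> y i - z i \<in> span (x ` J)"
proof -
  from bchoice[OF y] obtain c where c: "\<forall>i\<in>N. c i \<in> {1..l} \<and> y i \<in> Vs (c i)"
    by (elim exE)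
  have "\<forall>i\<in>N. \<exists>z a. z \<in> Vs (c i) \<and> a \<in> U \<and>
      a - z \<in> span (x ` {j\<in>J. g j \<noteq> c i}) \<and> y i - z \<in> span (x ` J)"
  proof
    fix i assume "i \<in> N"
    then have ci: "c i \<in> {1..l}" "y i \<in> Vs (c i)"
      using c by auto
    have "x ` {j\<in>J. g j = c i} \<subseteq> Vs (c i)"
      using x(2) by auto
    then obtain z a where "z \<in> Vs (c i)" "a \<in> U" "a - z \<in> span (x ` {j\<in>J. g j \<noteq> c i})"
        "y i - z \<in> span (x ` J)"
      by (rule complement_basis_lift[OF x(1) subspace_Vs[OF ci(1)] ci(2)])
    then show "\<exists>z a. z \<in> Vs (c i) \<and> a \<in> U \<and>
        a - z \<in> span (x ` {j\<in>J. g j \<noteq> c i}) \<and> y i - z \<in> span (x ` J)"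
      by (intro exI conjI)
  qed
  from bchoice[OF this] obtain z where "\<forall>i\<in>N. \<exists>a. z i \<in> Vs (c i) \<and> a \<in> U \<and>
      a - z i \<in> span (x ` {j\<in>J. g j \<noteq> c i}) \<and> y i - z i \<in> span (x ` J)"
    by (elim exE)
  from bchoice[OF this] obtain a where "\<forall>i\<in>N. z i \<in> Vs (c i) \<and> a i \<in> U \<and>
      a i - z i \<in> span (x ` {j\<in>J. g j \<noteq> c i}) \<and> y i - z i \<in> span (x ` J)"
    by (elim exE)
  then show thesis
    using that c by blast
qed

lemma adapted_upto_SucI:
  assumes k: "k < m" and adapted: "adapted_upto k x b g"
    and agree: "\<forall>i\<in>{dim (F k)<..dim UNIV}. x' i = x i \<and> b' i = b i \<and> g' i = g i"
    and x': "inj_on x' {dim (F (Suc k))<..dim UNIV}"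
      "complement_basis (F (Suc k)) (x' ` {dim (F (Suc k))<..dim UNIV})"
    and new: "\<forall>j\<in>{dim (F (Suc k))<..dim (F k)}. g' j \<in> {1..l} \<and> x' j \<in> Vs (g' j) \<and>
      b' j \<in> F k \<and> b' j - x' j \<in> span (x ` {i\<in>{dim (F k)<..dim UNIV}. g i \<noteq> g' j})"
  shows "adapted_upto (Suc k) x' b' g'"
proof -
  define n where "n = dim (UNIV :: 'b set)"
  define f where "f = flag_level scale m F"
  define J where "J = {dim (F k)<..n}"
  define N where "N = {dim (F (Suc k))<..dim (F k)}"
  define I where "I = {dim (F (Suc k))<..n}"
  have old: "\<forall>j\<in>J. g j \<in> {1..l} \<and> x j \<in> Vs (g j) \<and> b j \<in> F (f j) \<and>
      b j - x j \<in> span (x ` {i\<in>{1..n}. f i < f j \<and> g i \<noteq> g j})"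
    using adapted unfolding adapted_upto_def J_def n_def f_def by simp
  have "dim (F (Suc k)) \<le> dim (F k)" "dim (F k) \<le> n"
    using dim_flag_antimono[of k "Suc k"] k dim_subset[OF subset_UNIV] by (auto simp: n_def)
  then have IJN: "I = J \<union> N" "J \<inter> N = {}"
    by (auto simp: I_def J_def N_def)
  have level: "f i < k \<longleftrightarrow> i \<in> J" "f i < Suc k \<longleftrightarrow> i \<in> I" if "i \<in> {1..n}" for i
    using that flag_level_less_iff[of i k] flag_level_less_iff[of i "Suc k"] k
    by (auto simp: f_def n_def J_def I_def)
  have "b' j \<in> F (f j) \<and> b' j - x' j \<in> span (x' ` {i\<in>{1..n}. f i < f j \<and> g' i \<noteq> g' j})"
    if "j \<in> I" for j
  proof -
    have "f j \<le> k"
      using level(2)[of j] that by (auto simp: I_def)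
    then have lower_in_J: "{i\<in>{1..n}. f i < f j} \<subseteq> J"
      using flag_level_lower_subset[of k j] k by (simp add: f_def n_def J_def)
    then have "{i\<in>{1..n}. f i < f j \<and> g' i \<noteq> g' j} = {i\<in>{1..n}. f i < f j \<and> g i \<noteq> g' j}"
      using agree by (auto simp: J_def n_def)
    moreover have "x' ` {i\<in>{1..n}. f i < f j \<and> g i \<noteq> g' j} = x ` {i\<in>{1..n}. f i < f j \<and> g i \<noteq> g' j}"
      using lower_in_J agree by (intro image_cong) (auto simp: J_def n_def)
    ultimately have image_eq: "x' ` {i\<in>{1..n}. f i < f j \<and> g' i \<noteq> g' j} =
        x ` {i\<in>{1..n}. f i < f j \<and> g i \<noteq> g' j}"
      by simp
    show ?thesis
    proof (cases "j \<in> N")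
      case True
      then have "f j = k"
        using level[of j] that by (auto simp: I_def J_def N_def)
      moreover have "{i\<in>{1..n}. f i < k \<and> g i \<noteq> g' j} = {i\<in>J. g i \<noteq> g' j}"
        using level by (auto simp: J_def)
      ultimately show ?thesis
        using new True image_eq by (simp add: J_def N_def n_def)
    next
      case False
      then have "j \<in> J"
        using that IJN(1) by simp
      then show ?thesis
        using old agree image_eq by (simp add: J_def n_def)
    qed
  qed
  moreover have "g' j \<in> {1..l} \<and> x' j \<in> Vs (g' j)" if "j \<in> I" for j
    using old agree new that IJN(1) by (cases "j \<in> N") (auto simp: J_def N_def n_def)
  ultimately show ?thesis
    using x' unfolding adapted_upto_def I_def n_def f_def by simp
qed

lemma adapted_upto_Suc:
  assumes k: "k < m" and adapted: "adapted_upto k x b g"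
  obtains x' b' g' where "adapted_upto (Suc k) x' b' g'"
proof -
  define J where "J = {dim (F k)<..dim (UNIV :: 'b set)}"
  define N where "N = {dim (F (Suc k))<..dim (F k)}"
  define I where "I = {dim (F (Suc k))<..dim (UNIV :: 'b set)}"
  have x: "inj_on x J" "complement_basis (F k) (x ` J)"
    and hom: "\<forall>j\<in>J. g j \<in> {1..l} \<and> x j \<in> Vs (g j)"
    using adapted unfolding adapted_upto_def J_def by simp_all
  obtain y where y: "\<forall>i\<in>J. y i = x i" "inj_on y I" "complement_basis (F (Suc k)) (y ` I)"
      "\<forall>i\<in>N. \<exists>c. c \<in> {1..l} \<and> y i \<in> Vs c"
    using homogeneous_complement_extension[OF k x[unfolded J_def]]
    unfolding I_def N_def J_def by blast
  obtain c z a where lifted: "\<forall>i\<in>N. c i \<in> {1..l} \<and> z i \<in> Vs (c i) \<and> a i \<in> F k \<and>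
      a i - z i \<in> span (x ` {j\<in>J. g j \<noteq> c i}) \<and> y i - z i \<in> span (x ` J)"
    by (rule homogeneous_lifts_exist[OF x(2) hom y(4)])
  define x' where "x' i = (if i \<in> N then z i else y i)" for i
  have "dim (F (Suc k)) \<le> dim (F k)" "dim (F k) \<le> dim (UNIV :: 'b set)"
    using dim_flag_antimono[of k "Suc k"] k dim_subset[OF subset_UNIV] by auto
  then have IJN: "I = J \<union> N" "J \<inter> N = {}"
    by (auto simp: I_def J_def N_def)
  have "\<forall>i\<in>I. x' i - y i \<in> span (y ` {j\<in>I. i < j})"
  proof
    fix i assume "i \<in> I"
    show "x' i - y i \<in> span (y ` {j\<in>I. i < j})"
    proof (cases "i \<in> N")
      case True
      then have "J \<subseteq> {j\<in>I. i < j}"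
        using IJN(1) by (auto simp: J_def N_def)
      moreover have "x ` J = y ` J"
        using y(1) by (simp cong: image_cong)
      ultimately have "x ` J \<subseteq> y ` {j\<in>I. i < j}"
        by (metis image_mono)
      moreover have "y i - z i \<in> span (x ` J)"
        using True lifted by blast
      ultimately have "- (y i - z i) \<in> span (y ` {j\<in>I. i < j})"
        using span_mono span_neg by blast
      then show ?thesis
        using True by (simp add: x'_def)
    next
      case False
      then have "x' i - y i = 0"
        by (simp add: x'_def)
      then show ?thesis
        using span_zero by metis
    qed
  qed
  moreover have "finite I" "independent (y ` I)"
    using y(3) by (simp_all add: I_def complement_basis_def)
  ultimately have "inj_on x' I" "independent (x' ` I)" "span (x' ` I) = span (y ` I)"
    using unitriangular_image[OF _ y(2)] by simp_all
  then have "complement_basis (F (Suc k)) (x' ` I)"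
    using y(3) by (simp add: complement_basis_def)
  then have "adapted_upto (Suc k) x' (\<lambda>i. if i \<in> N then a i else b i) (\<lambda>i. if i \<in> N then c i else g i)"
    using adapted_upto_SucI[OF k adapted] \<open>inj_on x' I\<close> y(1) lifted IJN(2)
    by (fastforce simp: I_def J_def N_def x'_def)
  then show thesis
    by (rule that)
qed

lemma adapted_upto_exists: "k \<le> m \<Longrightarrow> \<exists>x b g. adapted_upto k x b g"
proof (induction k)
  case 0
  then show ?case
    using adapted_upto_0 by blast
next
  case (Suc k)
  then show ?case
    using adapted_upto_Suc by (metis Suc_le_lessD less_imp_le_nat)
qed

lemma adapted_bases_exist:
  obtains x b g where
    "indexed_basis scale x {1..dim UNIV} UNIV"
    "indexed_basis scale b {1..dim UNIV} UNIV"
    "\<forall>i\<in>{1..dim UNIV}. g i \<in> {1..l} \<and> x i \<in> Vs (g i)"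
    "\<forall>k\<le>m. indexed_basis scale b {1..dim (F k)} (F k)"
    "\<forall>i\<in>{1..dim UNIV}. b i - x i \<in> span (x ` {j\<in>{1..dim UNIV}.
       flag_level scale m F j < flag_level scale m F i \<and> g j \<noteq> g i})"
proof -
  define n where "n = dim (UNIV :: 'b set)"
  define f where "f = flag_level scale m F"
  from adapted_upto_exists[of m] obtain x b g where "adapted_upto m x b g"
    by (auto elim!: exE)
  moreover have F_m: "F m = {0}"
    using flag by (simp add: is_flag_def)
  then have "{dim (F m)<..dim (UNIV :: 'b set)} = {1..dim (UNIV :: 'b set)}"
    by auto
  ultimately have x: "inj_on x {1..n}" "complement_basis {0} (x ` {1..n})"
    and hom: "\<forall>i\<in>{1..n}. g i \<in> {1..l} \<and> x i \<in> Vs (g i) \<and> b i \<in> F (f i) \<and>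
      b i - x i \<in> span (x ` {j\<in>{1..n}. f j < f i \<and> g j \<noteq> g i})"
    unfolding adapted_upto_def n_def f_def by (simp_all only: F_m) blast
  have x_basis: "independent (x ` {1..n})" "span (x ` {1..n}) = UNIV"
    using x(2) by (auto simp: complement_basis_def)
  have "\<forall>i\<in>{1..n}. b i - x i \<in> span (x ` {j\<in>{1..n}. i < j})"
  proof
    fix i assume i: "i \<in> {1..n}"
    have "{j\<in>{1..n}. f j < f i \<and> g j \<noteq> g i} \<subseteq> {j\<in>{1..n}. i < j}"
      using flag_level_less_imp_less[of i] i by (auto simp: f_def n_def)
    then show "b i - x i \<in> span (x ` {j\<in>{1..n}. i < j})"
      using hom i span_mono[OF image_mono] by blast
  qed
  then have b: "inj_on b {1..n}" "independent (b ` {1..n})" "span (b ` {1..n}) = UNIV"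
    using unitriangular_image[of "{1..n}" x b] x(1) x_basis by simp_all
  have "indexed_basis scale b {1..dim (F k)} (F k)" if "k \<le> m" for k
    using flag_indexed_basis[OF b(1,2)[unfolded n_def]] hom that by (simp add: f_def n_def)
  show thesis
  proof (rule that[of x b g])
    show "indexed_basis scale x {1..dim UNIV} UNIV"
      using x(1) x_basis by (simp add: indexed_basis_def n_def)
    show "indexed_basis scale b {1..dim UNIV} UNIV"
      using b by (simp add: indexed_basis_def n_def)
  qed (use \<open>\<And>k. k \<le> m \<Longrightarrow> indexed_basis scale b {1..dim (F k)} (F k)\<close> hom
      in \<open>simp_all add: n_def f_def\<close>)
qed

end

end

end

theorem mainTheorem16:
  fixes scale :: "'k::field \<Rightarrow> 'v::ab_group_add \<Rightarrow> 'v"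
    and l m :: nat
    and Vs F :: "nat \<Rightarrow> 'v set"
  assumes vs: "vector_space scale"
    and fin: "\<exists>B. finite B \<and> module.span scale B = UNIV"
    and dsum: "internal_direct_sum scale l Vs"
    and flag: "is_flag scale m F"
    and l1: "l \<ge> 1" and m1: "m \<ge> 1"
  shows "\<exists>(x :: nat \<Rightarrow> 'v) (b :: nat \<Rightarrow> 'v) (S :: nat \<Rightarrow> nat \<Rightarrow> 'k) (g :: nat \<Rightarrow> nat).
    (let n = vector_space.dim scale (UNIV :: 'v set); f = flag_level scale m F in
      indexed_basis scale x {1..n} UNIV \<and>
      indexed_basis scale b {1..n} UNIV \<and>
      (\<forall>i\<in>{1..n}. \<forall>j\<in>{1..n}. j < i \<longrightarrow> S i j = 0) \<and>
      (\<forall>i\<in>{1..n}. S i i = 1) \<and>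
      (\<forall>i\<in>{1..n}. 1 \<le> g i \<and> g i \<le> l \<and> x i \<in> Vs (g i)) \<and>
      (\<forall>k\<le>m - 1. indexed_basis scale b {1..vector_space.dim scale (F k)} (F k)) \<and>
      (\<forall>i\<in>{1..n}.
         b i = x i + (\<Sum>j\<in>{i<..n}. scale (S i j) (x j)) \<and>
         b i = x i + (\<Sum>j\<in>{j\<in>{1..n}. f j < f i \<and> g j \<noteq> g i}. scale (S i j) (x j))))"
proof -
  interpret vector_space scale
    by (rule vs)
  obtain B where "finite_dimensional_vector_space scale B"
    using fin finite_dimensional_vector_space_exists by blast
  then interpret fd: finite_dimensional_vector_space scale B .
  define n where "n = dim (UNIV :: 'v set)"
  define f where "f = flag_level scale m F"
  have "subspace (Vs c)" if "c \<in> {1..l}" for c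
    using dsum that by (simp add: internal_direct_sum_def)
  from fd.adapted_bases_exist[OF flag this span_internal_direct_sum[OF dsum], folded n_def f_def]
  obtain x b g where x: "indexed_basis scale x {1..n} UNIV" and b: "indexed_basis scale b {1..n} UNIV"
    and g: "\<forall>i\<in>{1..n}. g i \<in> {1..l} \<and> x i \<in> Vs (g i)"
    and b_flag: "\<forall>k\<le>m. indexed_basis scale b {1..dim (F k)} (F k)"
    and b_x: "\<forall>i\<in>{1..n}. b i - x i \<in> span (x ` {j\<in>{1..n}. f j < f i \<and> g j \<noteq> g i})" .
  have "inj_on x {1..n}"
    using x by (simp add: indexed_basis_def)
  moreover have "\<forall>i\<in>{1..n}. {j\<in>{1..n}. f j < f i \<and> g j \<noteq> g i} \<subseteq> {i<..n} \<and>
      b i - x i \<in> span (x ` {j\<in>{1..n}. f j < f i \<and> g j \<noteq> g i})"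
    using fd.flag_level_less_imp_less[OF flag] b_x by (auto simp: f_def n_def)
  ultimately obtain S where "\<forall>i\<in>{1..n}. \<forall>j\<in>{1..n}. j < i \<longrightarrow> S i j = 0" "\<forall>i\<in>{1..n}. S i i = 1"
    "\<forall>i\<in>{1..n}. b i = x i + (\<Sum>j\<in>{i<..n}. scale (S i j) (x j)) \<and>
      b i = x i + (\<Sum>j\<in>{j\<in>{1..n}. f j < f i \<and> g j \<noteq> g i}. scale (S i j) (x j))"
    by (rule unitriangular_coefficients)
  then show ?thesis
    unfolding Let_def n_def[symmetric] f_def[symmetric]
    using x b g b_flag by (intro exI[of _ x] exI[of _ b] exI[of _ S] exI[of _ g]) auto
qed

end
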